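(* Let $\mathcal{K}\subseteq\wp(\mathcal{G})$ be coherent. For finitely many $A_1,\ldots,A_n\in\mathcal{K}$ ($n\ge1$) let $\mathbb{D}_{\{A_1,\ldots,A_n\}}$ be the set of all coherent $D\subseteq\mathcal{G}$ for which there is $\langle g_1,\ldots,g_n\rangle\in A_1\times\cdots\times A_n$ with $0\notin\mathcal{E}(\{g_1,\ldots,g_n\})$ and $D\supseteq\mathcal{E}(\{g_1,\ldots,g_n\})$, and let $\mathfrak{D}_{\mathcal{K}}:=\{\mathbb{D}_{\{A_1,\ldots,A_n\}}: n\ge1,\ A_1,\ldots,A_n\in\mathcal{K}\}$. Then: $\mathfrak{D}_{\mathcal{K}}$ is non-empty; each of its members is a non-empty set of coherent sets of desirable gambles; $\mathbb{D}_{\{A^1_1,\ldots,A^1_{n_1},A^2_1,\ldots,A^2_{n_2}\}}\subseteq\mathbb{D}_{\{A^1_1,\ldots,A^1_{n_1}\}}\cap\mathbb{D}_{\{A^2_1,\ldots,A^2_{n_2}\}}$ (so $\mathfrak{D}_{\mathcal{K}}$ is downwards closed); and $\mathcal{K}=\mathcal{K}_{\mathfrak{D}_{\mathcal{K}}}$.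
   Context: $\Omega$ is a non-empty set and $\mathcal{G}$ is the set of bounded functions $\Omega\to\mathbb{R}$. $f\geq g$ means pointwise $\geq$; $f\gneq g$ means $f\geq g$ and $f\neq g$; $\mathcal{G}_{\gneq 0}=\{f: f\gneq 0\}$. $\mathrm{posi}(B)=\{\sum_{i=1}^m\lambda_i h_i: m\geq1,\lambda_i>0,h_i\in B\}$, and $\mathcal{E}(E):=\mathrm{posi}(E\cup\mathcal{G}_{\gneq 0})$. A set $D\subseteq\mathcal{G}$ is coherent if $0\notin D$; $\mathcal{G}_{\gneq0}\subseteq D$; $\lambda g\in D$ whenever $g\in D,\lambda>0$; and $f+g\in D$ whenever $f,g\in D$. A set $\mathcal{K}\subseteq\wp(\mathcal{G})$ is coherent if: (K$_\emptyset$) $\emptyset\notin\mathcal{K}$; (K$_0$) if $A\in\mathcal{K}$ then $A\setminus\{0\}\in\mathcal{K}$; (K$_{\gneq0}$) if $g\in\mathcal{G}_{\gneq0}$ then $\{g\}\in\mathcal{K}$; (K$_\supseteq$) if $A\in\mathcal{K}$ and $B\supseteq A$ then $B\in\mathcal{K}$; (K$_{\mathrm{Dom}}$) if $A\in\mathcal{K}$ and for each $g\in A$, $f_g$ is a gamble with $f_g\geq g$, then $\{f_g: g\in A\}\in\mathcal{K}$; (K$_{\mathrm{Add}}$) if $A_1,\ldots,A_n\in\mathcal{K}$ (finitely many) and for each $\langle g_1,\ldots,g_n\rangle\in A_1\times\cdots\times A_n$, $f_{\langle g_1,\ldots,g_n\rangle}$ is some member of $\mathrm{posi}(\{g_1,\ldots,g_n\})$,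 then $\{f_{\langle g_1,\ldots,g_n\rangle}\}\in\mathcal{K}$ (the set of all these). A set $\mathfrak{D}$ of sets of coherent $D$'s is downwards closed if for all $\mathbb{D}_1,\mathbb{D}_2\in\mathfrak{D}$ there is $\mathbb{D}\in\mathfrak{D}$ with $\mathbb{D}\subseteq\mathbb{D}_1\cap\mathbb{D}_2$. For such $\mathfrak{D}$, $\mathcal{K}_{\mathfrak{D}}:=\{B\subseteq\mathcal{G}:\exists\mathbb{D}\in\mathfrak{D}\ \forall D\in\mathbb{D},\ B\cap D\neq\emptyset\}$. *)

theory Defs
  imports Complex_Main "HOL-Library.FuncSet"
begin

definition gamble :: "('a \<Rightarrow> real) \<Rightarrow> bool" where
  "gamble f \<longleftrightarrow> (\<exists>B. \<forall>x. \<bar>f x\<bar> \<le> B)"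

definition gambles :: "('a \<Rightarrow> real) set" where
  "gambles = {f. gamble f}"

definition gneq0 :: "('a \<Rightarrow> real) set" where
  "gneq0 = {f. gamble f \<and> (\<forall>x. f x \<ge> 0) \<and> f \<noteq> (\<lambda>x. 0)}"

definition posi :: "('a \<Rightarrow> real) set \<Rightarrow> ('a \<Rightarrow> real) set" where
  "posi B = {f. \<exists>m::nat. m \<ge> 1 \<and> (\<exists>lam h. (\<forall>i<m. lam i > (0::real) \<and> h i \<in> B)
                 \<and> f = (\<lambda>x. \<Sum>i<m. lam i * h i x))}"

definition Ext :: "('a \<Rightarrow> real) set \<Rightarrow> ('a \<Rightarrow> real) set" where
  "Ext E = posi (E \<union> gneq0)"

definition coherent_D :: "('a \<Rightarrow> real) set \<Rightarrow> bool" where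
  "coherent_D D \<longleftrightarrow> D \<subseteq> gambles \<and> (\<lambda>x. 0) \<notin> D \<and> gneq0 \<subseteq> D
     \<and> (\<forall>g\<in>D. \<forall>lam::real. lam > 0 \<longrightarrow> (\<lambda>x. lam * g x) \<in> D)
     \<and> (\<forall>f\<in>D. \<forall>g\<in>D. (\<lambda>x. f x + g x) \<in> D)"

text \<open>Coherent sets of desirable gamble sets. Finite families A_1..A_n are indexed by
  i < n; tuples in A_1 x ... x A_n are extensional functions in PiE {..<n} A.\<close>
definition coherent_K :: "('a \<Rightarrow> real) set set \<Rightarrow> bool" where
  "coherent_K K \<longleftrightarrow>
     K \<subseteq> Pow gambles
   \<and> {} \<notin> K
   \<and> (\<forall>A\<in>K. A - {\<lambda>x. 0} \<in> K)
   \<and> (\<forall>g\<in>gneq0. {g} \<in> K)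
   \<and> (\<forall>A\<in>K. \<forall>B. A \<subseteq> B \<and> B \<subseteq> gambles \<longrightarrow> B \<in> K)
   \<and> (\<forall>A\<in>K. \<forall>f. (\<forall>g\<in>A. gamble (f g) \<and> (\<forall>x. f g x \<ge> g x)) \<longrightarrow> f ` A \<in> K)
   \<and> (\<forall>n::nat. \<forall>As::nat \<Rightarrow> ('a \<Rightarrow> real) set. \<forall>F.
        n \<ge> 1 \<and> (\<forall>i<n. As i \<in> K)
        \<and> (\<forall>g\<in>PiE {..<n} As. F g \<in> posi (g ` {..<n}))
        \<longrightarrow> F ` (PiE {..<n} As) \<in> K)"

definition DD :: "nat \<Rightarrow> (nat \<Rightarrow> ('a \<Rightarrow> real) set) \<Rightarrow> ('a \<Rightarrow> real) set set" where
  "DD n As = {D. coherent_D D \<and> (\<exists>g\<in>PiE {..<n} As.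
       (\<lambda>x. 0) \<notin> Ext (g ` {..<n}) \<and> Ext (g ` {..<n}) \<subseteq> D)}"

definition frakD :: "('a \<Rightarrow> real) set set \<Rightarrow> ('a \<Rightarrow> real) set set set" where
  "frakD K = {DD n As | n As. n \<ge> 1 \<and> (\<forall>i<n. As i \<in> K)}"

definition downwards_closed :: "('a \<Rightarrow> real) set set set \<Rightarrow> bool" where
  "downwards_closed FD \<longleftrightarrow> (\<forall>D1\<in>FD. \<forall>D2\<in>FD. \<exists>D\<in>FD. D \<subseteq> D1 \<inter> D2)"

definition K_of :: "('a \<Rightarrow> real) set set set \<Rightarrow> ('a \<Rightarrow> real) set set" where
  "K_of FD = {B. B \<subseteq> gambles \<and> (\<exists>DS\<in>FD. \<forall>D\<in>DS. B \<inter> D \<noteq> {})}"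

definition concat_fam :: "nat \<Rightarrow> (nat \<Rightarrow> 'b set) \<Rightarrow> (nat \<Rightarrow> 'b set) \<Rightarrow> (nat \<Rightarrow> 'b set)" where
  "concat_fam n1 A1 A2 = (\<lambda>i. if i < n1 then A1 i else A2 (i - n1))"

end

theory Submission
  imports Defs
begin

text \<open>For a selection g \<in> A_1 \<times> \<dots> \<times> A_n, an element of E(g) is either positive or
  dominates a positive combination of g; in particular 0 \<in> E(g) yields a positive combination
  of g that is \<le> 0. If every selection were of this kind, K_Add would put the set of these
  combinations in K and K_Dom would raise it to {0}, contradicting K_0 and K_\<emptyset>; so each
  \<DD>_{A_1..A_n} contains the coherent set E(g) of some selection g. Conversely, a set B meeting
  every member of \<DD>_{A_1..A_n}, in particular every coherent E(g), either contains a positive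
  gamble or dominates, for every selection g, a positive combination of g (or one that is \<le> 0);
  the same K_Add/K_Dom/K_0 argument, followed by K_\<supseteq>, yields B \<in> K.\<close>

lemma gamble_add: "gamble f \<Longrightarrow> gamble g \<Longrightarrow> gamble (\<lambda>x. f x + g x)"
  unfolding gamble_def
proof -
  assume "\<exists>B. \<forall>x. \<bar>f x\<bar> \<le> B" "\<exists>B. \<forall>x. \<bar>g x\<bar> \<le> B"
  then obtain B1 B2 where "\<forall>x. \<bar>f x\<bar> \<le> B1" "\<forall>x. \<bar>g x\<bar> \<le> B2" by blast
  then have "\<forall>x. \<bar>f x + g x\<bar> \<le> B1 + B2" by (metis abs_triangle_ineq add_mono order_trans)
  then show "\<exists>B. \<forall>x. \<bar>f x + g x\<bar> \<le> B" by blast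
qed

lemma gamble_scale: "gamble f \<Longrightarrow> gamble (\<lambda>x. c * f x)"
  unfolding gamble_def
proof -
  assume "\<exists>B. \<forall>x. \<bar>f x\<bar> \<le> B"
  then obtain B where B: "\<forall>x. \<bar>f x\<bar> \<le> B" by blast
  have "\<forall>x. \<bar>c * f x\<bar> \<le> \<bar>c\<bar> * B"
    using B by (simp add: abs_mult mult_left_mono)
  then show "\<exists>B. \<forall>x. \<bar>c * f x\<bar> \<le> B" by blast
qed

lemma gamble_zero: "gamble (\<lambda>x. 0)" unfolding gamble_def by auto

lemma gamble_sum: "finite S \<Longrightarrow> (\<forall>i\<in>S. gamble (h i)) \<Longrightarrow> gamble (\<lambda>x. \<Sum>i\<in>S. c i * h i x)"
proof (induction S rule: finite_induct)
  case empty then show ?case by (simp add: gamble_zero)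
next
  case (insert a F)
  then show ?case using gamble_add[OF gamble_scale[of "h a" "c a"], of "\<lambda>x. \<Sum>i\<in>F. c i * h i x"]
    by simp
qed

lemma posi_iff_finite_index:
  "f \<in> posi B \<longleftrightarrow> (\<exists>S::nat set. finite S \<and> S \<noteq> {}
     \<and> (\<exists>lam h. (\<forall>i\<in>S. lam i > (0::real) \<and> h i \<in> B) \<and> f = (\<lambda>x. \<Sum>i\<in>S. lam i * h i x)))"
  (is "_ \<longleftrightarrow> ?rhs")
proof
  assume "f \<in> posi B"
  then obtain m :: nat and lam h where "m \<ge> 1" "\<forall>i<m. lam i > (0::real) \<and> h i \<in> B"
    "f = (\<lambda>x. \<Sum>i<m. lam i * h i x)"
    unfolding posi_def by blast
  then show ?rhs by (intro exI[of _ "{..<m}"]) (auto simp: lessThan_empty_iff)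
next
  assume ?rhs
  then obtain S :: "nat set" and lam h where S: "finite S" "S \<noteq> {}"
    "\<forall>i\<in>S. lam i > (0::real) \<and> h i \<in> B" "f = (\<lambda>x. \<Sum>i\<in>S. lam i * h i x)"
    by blast
  obtain b where b: "bij_betw b {0..<card S} S" using ex_bij_betw_nat_finite[OF S(1)] by blast
  have m: "card S \<ge> 1" using S by (simp add: Suc_le_eq card_gt_0_iff)
  have p: "\<forall>i<card S. lam (b i) > 0 \<and> h (b i) \<in> B"
    using b S(3) by (auto simp: bij_betw_def)
  have e: "f = (\<lambda>x. \<Sum>i<card S. lam (b i) * h (b i) x)"
    using sum.reindex_bij_betw[OF b, of "\<lambda>i. lam i * h i _"] S(4) by (simp add: atLeast0LessThan)
  show "f \<in> posi B" unfolding posi_def using m p e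
    by (intro CollectI exI[of _ "card S"] conjI exI[of _ "lam \<circ> b"] exI[of _ "h \<circ> b"]) auto
qed

lemma posi_mono: "A \<subseteq> B \<Longrightarrow> posi A \<subseteq> posi B"
  unfolding posi_def by blast

lemma Ext_mono: "A \<subseteq> B \<Longrightarrow> Ext A \<subseteq> Ext B"
  unfolding Ext_def by (rule posi_mono) blast

lemma in_posi: "g \<in> B \<Longrightarrow> g \<in> posi B"
  unfolding posi_def
  by (intro CollectI exI[of _ 1] conjI exI[of _ "\<lambda>_. 1::real"] exI[of _ "\<lambda>_. g"]) auto

lemma posi_scale: "f \<in> posi B \<Longrightarrow> c > 0 \<Longrightarrow> (\<lambda>x. c * f x) \<in> posi B"
proof -
  assume "f \<in> posi B" "c > 0"
  then obtain m :: nat and lam h where "m \<ge> 1" "\<forall>i<m. lam i > (0::real) \<and> h i \<in> B" "f = (\<lambda>x. \<Sum>i<m. lam i * h i x)"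
    unfolding posi_def by blast
  then show ?thesis unfolding posi_def using \<open>c > 0\<close>
    by (intro CollectI exI[of _ m] conjI exI[of _ "\<lambda>i. c * lam i"] exI[of _ h])
       (auto simp: sum_distrib_left mult.assoc)
qed

lemma posi_add: "f \<in> posi B \<Longrightarrow> g \<in> posi B \<Longrightarrow> (\<lambda>x. f x + g x) \<in> posi B"
proof -
  assume "f \<in> posi B" "g \<in> posi B"
  then obtain m1 m2 :: nat and lam1 h1 lam2 h2 where
    1: "m1 \<ge> 1" "\<forall>i<m1. lam1 i > (0::real) \<and> h1 i \<in> B" "f = (\<lambda>x. \<Sum>i<m1. lam1 i * h1 i x)" and
    2: "m2 \<ge> 1" "\<forall>i<m2. lam2 i > (0::real) \<and> h2 i \<in> B" "g = (\<lambda>x. \<Sum>i<m2. lam2 i * h2 i x)"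
    unfolding posi_def by blast
  define lam where "lam i = (if i < m1 then lam1 i else lam2 (i - m1))" for i
  define h where "h i = (if i < m1 then h1 i else h2 (i - m1))" for i
  let ?S = "{..<m1} \<union> (\<lambda>i. i + m1) ` {..<m2}"
  have "finite ?S" "?S \<noteq> {}" using 1 lessThan_empty_iff[of m1] by auto
  moreover have "\<forall>i\<in>?S. lam i > 0 \<and> h i \<in> B" using 1 2 by (auto simp: lam_def h_def)
  moreover have "(\<lambda>x. f x + g x) = (\<lambda>x. \<Sum>i\<in>?S. lam i * h i x)"
  proof
    fix x
    have "(\<Sum>i\<in>?S. lam i * h i x) = (\<Sum>i<m1. lam i * h i x) + (\<Sum>i\<in>(\<lambda>i. i + m1) ` {..<m2}. lam i * h i x)"
      by (rule sum.union_disjoint) auto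
    also have "(\<Sum>i\<in>(\<lambda>i. i + m1) ` {..<m2}. lam i * h i x) = (\<Sum>i<m2. lam (i+m1) * h (i+m1) x)"
      by (subst sum.reindex) (auto simp: inj_on_def)
    also have "(\<Sum>i<m1. lam i * h i x) = f x" unfolding 1(3)
      by (rule sum.cong) (auto simp: lam_def h_def)
    also have "(\<Sum>i<m2. lam (i+m1) * h (i+m1) x) = g x" unfolding 2(3)
      by (rule sum.cong) (auto simp: lam_def h_def)
    finally show "f x + g x = (\<Sum>i\<in>?S. lam i * h i x)" by simp
  qed
  ultimately show ?thesis unfolding posi_iff_finite_index by (intro exI[of _ ?S]) blast
qed

lemma posi_gambles: "B \<subseteq> gambles \<Longrightarrow> posi B \<subseteq> gambles"
  unfolding posi_def gambles_def
proof clarify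
  fix m :: nat and lam :: "nat \<Rightarrow> real" and h assume "B \<subseteq> Collect gamble" "\<forall>i<m. 0 < lam i \<and> h i \<in> B"
  then show "gamble (\<lambda>x. \<Sum>i<m. lam i * h i x)" by (intro gamble_sum) auto
qed

lemma gneq0_gambles: "gneq0 \<subseteq> gambles" unfolding gneq0_def gambles_def by auto

lemma zero_not_gneq0: "(\<lambda>x. 0) \<notin> gneq0" unfolding gneq0_def by auto

lemma posi_gneq0: "posi gneq0 \<subseteq> gneq0"
proof
  fix f assume "f \<in> posi gneq0"
  then obtain m :: nat and lam h where m: "m \<ge> 1" "\<forall>i<m. lam i > (0::real) \<and> h i \<in> gneq0" "f = (\<lambda>x. \<Sum>i<m. lam i * h i x)"
    unfolding posi_def by blast
  have g: "gamble f" using posi_gambles[OF gneq0_gambles] \<open>f \<in> posi gneq0\<close> by (auto simp: gambles_def)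
  have nn: "\<forall>i<m. \<forall>x. lam i * h i x \<ge> 0" using m(2) by (auto simp: gneq0_def)
  have "\<forall>x. f x \<ge> 0" using m(3) nn by (auto intro: sum_nonneg)
  moreover have "f \<noteq> (\<lambda>x. 0)"
  proof -
    have "h 0 \<in> gneq0" "lam 0 > 0" using m by auto
    then obtain x where x: "h 0 x \<noteq> 0" "h 0 x \<ge> 0" unfolding gneq0_def by fastforce
    then have "lam 0 * h 0 x > 0" using \<open>lam 0 > 0\<close> by simp
    also have "lam 0 * h 0 x \<le> (\<Sum>i<m. lam i * h i x)"
      by (rule member_le_sum[of 0 "{..<m}" "\<lambda>i. lam i * h i x"]) (use m nn in auto)
    finally show ?thesis using m(3) by (metis less_irrefl)
  qed
  ultimately show "f \<in> gneq0" using g unfolding gneq0_def by auto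
qed

lemma Ext_dominates_posi:
  assumes "f \<in> Ext E"
  shows "f \<in> gneq0 \<or> (\<exists>p\<in>posi E. \<forall>x. p x \<le> f x)"
proof -
  obtain m :: nat and lam h where m: "m \<ge> 1" "\<forall>i<m. lam i > (0::real) \<and> h i \<in> E \<union> gneq0" "f = (\<lambda>x. \<Sum>i<m. lam i * h i x)"
    using assms unfolding Ext_def posi_def by blast
  define I where "I = {i. i < m \<and> h i \<in> E}"
  show ?thesis
  proof (cases "I = {}")
    case True
    then have "\<forall>i<m. lam i > 0 \<and> h i \<in> gneq0" using m(2) by (auto simp: I_def)
    then have "f \<in> posi gneq0" unfolding posi_def using m by blast
    then show ?thesis using posi_gneq0 by blast
  next
    case False
    have fI: "finite I" by (simp add: I_def)
    let ?p = "\<lambda>x. \<Sum>i\<in>I. lam i * h i x"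
    have "?p \<in> posi E" unfolding posi_iff_finite_index using False fI m(2)
      by (intro exI[of _ I] conjI exI[of _ lam] exI[of _ h]) (auto simp: I_def)
    moreover have "\<forall>x. ?p x \<le> f x"
    proof
      fix x
      have "\<forall>i\<in>{..<m} - I. 0 \<le> lam i * h i x" using m(2) by (auto simp: I_def gneq0_def)
      then show "?p x \<le> f x" unfolding m(3)
        by (intro sum_mono2) (auto simp: I_def)
    qed
    ultimately show ?thesis by (intro disjI2 bexI[of _ ?p]) simp_all
  qed
qed

lemma Ext_coherent:
  assumes "E \<subseteq> gambles" "(\<lambda>x. 0) \<notin> Ext E"
  shows "coherent_D (Ext E)"
  unfolding coherent_D_def
proof (intro conjI ballI allI impI)
  show "Ext E \<subseteq> gambles" unfolding Ext_def using assms(1) gneq0_gambles by (intro posi_gambles) auto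
  show "(\<lambda>x. 0) \<notin> Ext E" by fact
  show "gneq0 \<subseteq> Ext E" unfolding Ext_def using in_posi by blast
  show "\<And>g lam. g \<in> Ext E \<Longrightarrow> 0 < lam \<Longrightarrow> (\<lambda>x. lam * g x) \<in> Ext E"
    unfolding Ext_def by (rule posi_scale)
  show "\<And>f g. f \<in> Ext E \<Longrightarrow> g \<in> Ext E \<Longrightarrow> (\<lambda>x. f x + g x) \<in> Ext E"
    unfolding Ext_def by (rule posi_add)
qed

lemma coherent_KD:
  assumes "coherent_K K"
  shows "K \<subseteq> Pow gambles" "{} \<notin> K" "\<forall>A\<in>K. A - {\<lambda>x. 0} \<in> K" "\<forall>g\<in>gneq0. {g} \<in> K"
    "\<forall>A\<in>K. \<forall>B. A \<subseteq> B \<and> B \<subseteq> gambles \<longrightarrow> B \<in> K"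
    "\<forall>A\<in>K. \<forall>f. (\<forall>g\<in>A. gamble (f g) \<and> (\<forall>x. f g x \<ge> g x)) \<longrightarrow> f ` A \<in> K"
    "\<forall>n::nat. \<forall>As F. n \<ge> 1 \<and> (\<forall>i<n. As i \<in> K) \<and> (\<forall>g\<in>PiE {..<n} As. F g \<in> posi (g ` {..<n}))
        \<longrightarrow> F ` PiE {..<n} As \<in> K"
  using assms unfolding coherent_K_def by simp_all

lemma coherent_K_gambles: "coherent_K K \<Longrightarrow> A \<in> K \<Longrightarrow> A \<subseteq> gambles"
  using coherent_KD(1) by blast

lemma coherent_K_empty: "coherent_K K \<Longrightarrow> {} \<notin> K"
  by (rule coherent_KD(2))

lemma coherent_K_remove_zero: "coherent_K K \<Longrightarrow> A \<in> K \<Longrightarrow> A - {\<lambda>x. 0} \<in> K"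
  using coherent_KD(3) by blast

lemma coherent_K_singleton: "coherent_K K \<Longrightarrow> g \<in> gneq0 \<Longrightarrow> {g} \<in> K"
  using coherent_KD(4) by blast

lemma coherent_K_superset: "coherent_K K \<Longrightarrow> A \<in> K \<Longrightarrow> A \<subseteq> B \<Longrightarrow> B \<subseteq> gambles \<Longrightarrow> B \<in> K"
  using coherent_KD(5) by blast

lemma coherent_K_dominance:
  assumes "coherent_K K" "A \<in> K" "\<forall>g\<in>A. gamble (f g) \<and> (\<forall>x. g x \<le> f g x)"
  shows "f ` A \<in> K"
  using coherent_KD(6)[OF assms(1)] assms(2,3) by blast

lemma coherent_K_posi_selection:
  fixes n :: nat
  assumes "coherent_K K" "n \<ge> 1" "\<forall>i<n. As i \<in> K" "\<forall>g\<in>PiE {..<n} As. F g \<in> posi (g ` {..<n})"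
  shows "F ` PiE {..<n} As \<in> K"
  using coherent_KD(7)[OF assms(1)] assms(2-4) by blast

lemma coherent_K_dominating_set:
  fixes n :: nat and K :: "('a \<Rightarrow> real) set set"
  assumes K: "coherent_K K" and n: "n \<ge> 1" and As: "\<forall>i<n. As i \<in> K" and B: "B \<subseteq> gambles"
    and dom: "\<forall>g\<in>PiE {..<n} As. \<exists>p\<in>posi (g ` {..<n}). \<exists>b\<in>insert (\<lambda>x. 0) B. \<forall>x. p x \<le> b x"
  shows "B \<in> K"
proof -
  from dom have "\<forall>g\<in>PiE {..<n} As. \<exists>p. p \<in> posi (g ` {..<n})
      \<and> (\<exists>b\<in>insert (\<lambda>x. 0) B. \<forall>x. p x \<le> b x)" by (simp only: Bex_def)
  then obtain F where F: "\<forall>g\<in>PiE {..<n} As. F g \<in> posi (g ` {..<n})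
      \<and> (\<exists>b\<in>insert (\<lambda>x. 0) B. \<forall>x. F g x \<le> b x)"
    by (rule bchoice[elim_format]) blast
  have FK: "F ` PiE {..<n} As \<in> K"
    using coherent_K_posi_selection[OF K n As] F by blast
  define up where "up s = (SOME b. b \<in> insert (\<lambda>x. 0) B \<and> (\<forall>x. s x \<le> b x))" for s :: "'a \<Rightarrow> real"
  have up: "up s \<in> insert (\<lambda>x. 0) B \<and> (\<forall>x. s x \<le> up s x)" if "s \<in> F ` PiE {..<n} As" for s
  proof -
    from that F have "\<exists>b. b \<in> insert (\<lambda>x. 0) B \<and> (\<forall>x. s x \<le> b x)" by blast
    then show ?thesis unfolding up_def by (rule someI_ex)
  qed
  have "up ` F ` PiE {..<n} As \<in> K"
  proof (rule coherent_K_dominance[OF K FK], intro ballI conjI)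
    fix s assume s: "s \<in> F ` PiE {..<n} As"
    show "gamble (up s)" using up[OF s] B gamble_zero unfolding gambles_def by auto
    show "\<forall>x. s x \<le> up s x" using up[OF s] by blast
  qed
  then have "up ` F ` PiE {..<n} As - {\<lambda>x. 0} \<in> K" by (rule coherent_K_remove_zero[OF K])
  then show ?thesis by (rule coherent_K_superset[OF K _ _ B]) (use up in blast)
qed

lemma coherent_K_avoiding_selection:
  fixes n :: nat and K :: "('a \<Rightarrow> real) set set"
  assumes K: "coherent_K K" and n: "n \<ge> 1" and As: "\<forall>i<n. As i \<in> K"
  obtains g where "g \<in> PiE {..<n} As" "(\<lambda>x. 0) \<notin> Ext (g ` {..<n})"
proof (rule ccontr)
  assume "\<not> thesis"
  with that have "\<forall>g\<in>PiE {..<n} As. (\<lambda>x. 0) \<in> Ext (g ` {..<n})" by blast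
  then have "\<forall>g\<in>PiE {..<n} As. \<exists>p\<in>posi (g ` {..<n}). \<exists>b\<in>insert (\<lambda>x. 0) {}. \<forall>x. p x \<le> b x"
    using Ext_dominates_posi zero_not_gneq0 by fastforce
  then have "{} \<in> K" using coherent_K_dominating_set[OF K n As] by simp
  with coherent_K_empty[OF K] show False by blast
qed

lemma Ext_selection_in_DD:
  fixes n :: nat
  assumes K: "coherent_K K" and As: "\<forall>i<n. As i \<in> K"
    and g: "g \<in> PiE {..<n} As" and g0: "(\<lambda>x. 0) \<notin> Ext (g ` {..<n})"
  shows "Ext (g ` {..<n}) \<in> DD n As"
proof -
  have "g ` {..<n} \<subseteq> gambles" using coherent_K_gambles[OF K] As g by (force simp: PiE_iff)
  from Ext_coherent[OF this g0] show ?thesis unfolding DD_def using g g0 by blast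
qed

lemma DD_nonempty:
  fixes n :: nat
  assumes K: "coherent_K K" and n: "n \<ge> 1" and As: "\<forall>i<n. As i \<in> K"
  shows "DD n As \<noteq> {}"
  using coherent_K_avoiding_selection[OF assms] Ext_selection_in_DD[OF K As] by blast

lemma DD_coherent: "D \<in> DD n As \<Longrightarrow> coherent_D D"
  unfolding DD_def by blast

lemma DD_in_frakD: "n \<ge> 1 \<Longrightarrow> \<forall>i<n. As i \<in> K \<Longrightarrow> DD n As \<in> frakD K"
  unfolding frakD_def by blast

lemma DD_concat_fam:
  "DD (n1 + n2) (concat_fam n1 A1 A2) \<subseteq> DD n1 A1 \<inter> DD n2 A2"
proof
  fix D assume "D \<in> DD (n1 + n2) (concat_fam n1 A1 A2)"
  then obtain g where D: "coherent_D D" "g \<in> PiE {..<n1+n2} (concat_fam n1 A1 A2)"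
    "(\<lambda>x. 0) \<notin> Ext (g ` {..<n1+n2})" "Ext (g ` {..<n1+n2}) \<subseteq> D"
    unfolding DD_def by blast
  define g1 where "g1 = restrict g {..<n1}"
  define g2 where "g2 = restrict (\<lambda>i. g (i + n1)) {..<n2}"
  have gi: "g i \<in> concat_fam n1 A1 A2 i" if "i < n1 + n2" for i
    using D(2) that by (auto simp: PiE_iff)
  have "g i \<in> A1 i" if "i < n1" for i using gi[of i] that by (simp add: concat_fam_def)
  then have g1: "g1 \<in> PiE {..<n1} A1" unfolding g1_def by auto
  have "g (i + n1) \<in> A2 i" if "i < n2" for i using gi[of "i + n1"] that by (simp add: concat_fam_def)
  then have g2: "g2 \<in> PiE {..<n2} A2" unfolding g2_def by auto
  have "g1 ` {..<n1} \<subseteq> g ` {..<n1+n2}" "g2 ` {..<n2} \<subseteq> g ` {..<n1+n2}"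
    unfolding g1_def g2_def by auto
  from this[THEN Ext_mono] show "D \<in> DD n1 A1 \<inter> DD n2 A2"
    unfolding DD_def using D g1 g2 by blast
qed

lemma concat_fam_in_K:
  "\<forall>i<n1. A1 i \<in> K \<Longrightarrow> \<forall>i<n2. A2 i \<in> K \<Longrightarrow> \<forall>i<n1+n2. concat_fam n1 A1 A2 i \<in> K"
  unfolding concat_fam_def by auto

lemma frakD_downwards_closed: "downwards_closed (frakD K)"
  unfolding downwards_closed_def
proof (intro ballI)
  fix D1 D2 assume "D1 \<in> frakD K" "D2 \<in> frakD K"
  then obtain n1 A1 n2 A2 where D1: "D1 = DD n1 A1" "n1 \<ge> 1" "\<forall>i<n1. A1 i \<in> K"
    and D2: "D2 = DD n2 A2" "n2 \<ge> 1" "\<forall>i<n2. A2 i \<in> K"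
    unfolding frakD_def by blast
  have "n1 + n2 \<ge> 1" using D1(2) by simp
  then have "DD (n1 + n2) (concat_fam n1 A1 A2) \<in> frakD K"
    using DD_in_frakD concat_fam_in_K[OF D1(3) D2(3)] by blast
  moreover have "DD (n1 + n2) (concat_fam n1 A1 A2) \<subseteq> D1 \<inter> D2"
    unfolding D1(1) D2(1) by (rule DD_concat_fam)
  ultimately show "\<exists>D\<in>frakD K. D \<subseteq> D1 \<inter> D2" by blast
qed

lemma K_subset_K_of_frakD:
  assumes K: "coherent_K K" and A: "A \<in> K"
  shows "A \<in> K_of (frakD K)"
proof -
  have "A \<inter> D \<noteq> {}" if "D \<in> DD 1 (\<lambda>_. A)" for D
  proof -
    from that obtain g where g: "g \<in> PiE {..<1::nat} (\<lambda>_. A)" "Ext (g ` {..<1::nat}) \<subseteq> D"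
      unfolding DD_def by blast
    have "g 0 \<in> Ext (g ` {..<1::nat})" unfolding Ext_def by (rule in_posi) auto
    with g show ?thesis by (auto simp: PiE_iff)
  qed
  moreover have "DD 1 (\<lambda>_. A) \<in> frakD K" using A by (intro DD_in_frakD) auto
  ultimately show ?thesis
    unfolding K_of_def using coherent_K_gambles[OF K A] by blast
qed

lemma K_of_frakD_subset_K:
  fixes K :: "('a \<Rightarrow> real) set set"
  assumes K: "coherent_K K" and B: "B \<in> K_of (frakD K)"
  shows "B \<in> K"
proof -
  obtain n As where Bg: "B \<subseteq> gambles" and n: "n \<ge> 1" and As: "\<forall>i<n. As i \<in> K"
    and meet: "\<forall>D\<in>DD n As. B \<inter> D \<noteq> {}"
    using B unfolding K_of_def frakD_def by blast
  show ?thesis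
  proof (cases "B \<inter> gneq0 = {}")
    case False
    then obtain h where "h \<in> B" "h \<in> gneq0" by blast
    from coherent_K_singleton[OF K \<open>h \<in> gneq0\<close>] show ?thesis
      by (rule coherent_K_superset[OF K _ _ Bg]) (use \<open>h \<in> B\<close> in blast)
  next
    case True
    have "\<exists>p\<in>posi (g ` {..<n}). \<exists>b\<in>insert (\<lambda>x. 0) B. \<forall>x. p x \<le> b x"
      if g: "g \<in> PiE {..<n} As" for g
    proof (cases "(\<lambda>x. 0) \<in> Ext (g ` {..<n})")
      case True
      from Ext_dominates_posi[OF this] zero_not_gneq0 show ?thesis by auto
    next
      case False
      from meet Ext_selection_in_DD[OF K As g False] obtain b
        where "b \<in> B" "b \<in> Ext (g ` {..<n})" by blast
      moreover from True \<open>b \<in> B\<close> have "b \<notin> gneq0" by blast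
      ultimately obtain p where "p \<in> posi (g ` {..<n})" "\<forall>x. p x \<le> b x"
        using Ext_dominates_posi by blast
      with \<open>b \<in> B\<close> show ?thesis by blast
    qed
    then show ?thesis by (rule coherent_K_dominating_set[OF K n As Bg, rule_format])
  qed
qed

theorem mainTheorem9:
  fixes K :: "('a \<Rightarrow> real) set set"
  assumes "coherent_K K"
  shows "frakD K \<noteq> {}
    \<and> (\<forall>DS\<in>frakD K. DS \<noteq> {} \<and> (\<forall>D\<in>DS. coherent_D D))
    \<and> (\<forall>n1 n2 (A1::nat \<Rightarrow> ('a \<Rightarrow> real) set) A2.
          n1 \<ge> 1 \<and> n2 \<ge> 1 \<and> (\<forall>i<n1. A1 i \<in> K) \<and> (\<forall>i<n2. A2 i \<in> K)
          \<longrightarrow> DD (n1 + n2) (concat_fam n1 A1 A2) \<subseteq> DD n1 A1 \<inter> DD n2 A2)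
    \<and> downwards_closed (frakD K)
    \<and> K = K_of (frakD K)"
proof (intro conjI)
  have "(\<lambda>x::'a. 1::real) \<in> gneq0" unfolding gneq0_def gamble_def by (auto simp: fun_eq_iff)
  from coherent_K_singleton[OF assms this] show "frakD K \<noteq> {}"
    using DD_in_frakD[of 1 "\<lambda>_. {\<lambda>x. 1}"] by blast
  show "\<forall>DS\<in>frakD K. DS \<noteq> {} \<and> (\<forall>D\<in>DS. coherent_D D)"
    unfolding frakD_def using DD_nonempty[OF assms] DD_coherent by blast
  show "\<forall>n1 n2 A1 A2. n1 \<ge> 1 \<and> n2 \<ge> 1 \<and> (\<forall>i<n1. A1 i \<in> K) \<and> (\<forall>i<n2. A2 i \<in> K)
          \<longrightarrow> DD (n1 + n2) (concat_fam n1 A1 A2) \<subseteq> DD n1 A1 \<inter> DD n2 A2"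
    using DD_concat_fam by blast
  show "downwards_closed (frakD K)" by (rule frakD_downwards_closed)
  show "K = K_of (frakD K)"
    using K_subset_K_of_frakD[OF assms] K_of_frakD_subset_K[OF assms] by blast
qed

end
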